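(* Let $X$ be a finite set and let $\mu,\nu:X\to[0,\infty)$ with $\|\mu\|_1\le1$ and $\|\nu\|_1\le1$. Let $\eta,\delta>0$, let $J(x)=(x+|x|)/2$, and let $\epsilon=\delta/\bigl(2\rho(\eta^{-1},\delta/4,J)\bigr)$. Let $\|\cdot\|$ be a norm on $\mathbb{R}^X$ whose dual norm $\|\cdot\|^*$ is an algebra norm, and suppose $\|\mu-\nu\|\le\epsilon$. Then for every $f$ with $0\le f\le\mu$ there exists $g$ with $0\le g\le(1-\delta)^{-1}\nu$ and $\|f-g\|\le\eta$.
   Context: For functions on $X$: $\langle f,g\rangle=\frac1{|X|}\sum_xf(x)g(x)$, $\|f\|_1=\frac1{|X|}\sum_x|f(x)|$; inequalities between functions are pointwise. The dual norm is $\|\phi\|^*=\max\{\langle f,\phi\rangle:\|f\|\le1\}$. An algebra norm is a norm $N$ with $N(fg)\le N(f)N(g)$ (pointwise product) and $N(\mathbf 1)=1$. For a real polynomial $P(x)=\sum_ka_kx^k$, $R_P(x)=\sum_k|a_k|x^k$; for continuous $J$ and $C,\delta>0$, $\rho(C,\delta,J)$ is twice the infimum of $R_P(C)$ over all real polynomials $P$ with $|P(x)-J(x)|\le\delta$ for all $x\in[-C,C]$. *)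

theory Defs
  imports "HOL-Analysis.Analysis" "HOL-Computational_Algebra.Polynomial"
begin

definition ip :: "('a::finite \<Rightarrow> real) \<Rightarrow> ('a \<Rightarrow> real) \<Rightarrow> real" where
  "ip f g = (1 / real CARD('a)) * (\<Sum>x\<in>UNIV. f x * g x)"

definition L1norm :: "('a::finite \<Rightarrow> real) \<Rightarrow> real" where
  "L1norm f = (1 / real CARD('a)) * (\<Sum>x\<in>UNIV. \<bar>f x\<bar>)"

definition is_norm :: "(('a::finite \<Rightarrow> real) \<Rightarrow> real) \<Rightarrow> bool" where
  "is_norm N \<longleftrightarrow>
     (\<forall>f. 0 \<le> N f) \<and> (\<forall>f. N f = 0 \<longleftrightarrow> f = (\<lambda>_. 0)) \<and>
     (\<forall>c f. N (\<lambda>x. c * f x) = \<bar>c\<bar> * N f) \<and>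
     (\<forall>f g. N (\<lambda>x. f x + g x) \<le> N f + N g)"

definition dual_norm :: "(('a::finite \<Rightarrow> real) \<Rightarrow> real) \<Rightarrow> ('a \<Rightarrow> real) \<Rightarrow> real" where
  "dual_norm N \<phi> = Sup {ip f \<phi> | f. N f \<le> 1}"

definition is_algebra_norm :: "(('a::finite \<Rightarrow> real) \<Rightarrow> real) \<Rightarrow> bool" where
  "is_algebra_norm N \<longleftrightarrow> is_norm N \<and>
     (\<forall>f g. N (\<lambda>x. f x * g x) \<le> N f * N g) \<and> N (\<lambda>_. 1) = 1"

definition R_poly :: "real poly \<Rightarrow> real \<Rightarrow> real" where
  "R_poly P x = (\<Sum>k\<le>degree P. \<bar>coeff P k\<bar> * x ^ k)"

definition rho :: "real \<Rightarrow> real \<Rightarrow> (real \<Rightarrow> real) \<Rightarrow> real" where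
  "rho C \<delta> J = 2 * Inf {R_poly P C | P. \<forall>x\<in>{-C..C}. \<bar>poly P x - J x\<bar> \<le> \<delta>}"

end

theory Submission
  imports Defs
begin

text \<open>
  Suppose no admissible \<open>g\<close> exists. The admissible set plus the \<open>\<eta>\<close>-ball of \<open>\<parallel>\<cdot>\<parallel>\<close> is compact
  plus closed and convex, so a hyperplane separates \<open>f\<close> from it; normalising the separating
  functional gives \<open>\<phi>\<close> with \<open>\<langle>f,\<phi>\<rangle> > 1\<close> and \<open>\<langle>\<nu>, J \<circ> \<phi>\<rangle> / (1 - \<delta>) + \<eta> \<parallel>\<phi>\<parallel>\<^sup>* \<le> 1\<close>.
  Hence \<open>\<langle>\<mu> - \<nu>, J \<circ> \<phi>\<rangle> > \<delta>\<close> while \<open>\<parallel>\<phi>\<parallel>\<^sup>* \<le> 1/\<eta>\<close>. Since \<open>\<parallel>\<cdot>\<parallel>\<^sup>*\<close> is an algebra norm it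
  dominates the sup norm and satisfies \<open>\<parallel>P \<circ> \<phi>\<parallel>\<^sup>* \<le> R\<^sub>P(\<parallel>\<phi>\<parallel>\<^sup>*)\<close>, so replacing \<open>J\<close> by a
  polynomial \<open>\<delta>/4\<close>-close to it on \<open>[-1/\<eta>, 1/\<eta>]\<close> bounds the same pairing by
  \<open>\<rho>/2 \<parallel>\<mu> - \<nu>\<parallel> + \<delta>/4 \<parallel>\<mu> - \<nu>\<parallel>\<^sub>1 < \<delta>\<close>.
\<close>

lemma is_normD:
  assumes "is_norm N"
  shows "N (\<lambda>_. 0) = 0" "0 \<le> N f" "N f = 0 \<longleftrightarrow> f = (\<lambda>_. 0)"
    "N (\<lambda>x. c * f x) = \<bar>c\<bar> * N f" "N (\<lambda>x. f x + g x) \<le> N f + N g"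
  using assms unfolding is_norm_def by auto

lemma is_algebra_normD:
  assumes "is_algebra_norm N"
  shows "is_norm N" "N (\<lambda>x. f x * g x) \<le> N f * N g" "N (\<lambda>_. 1) = 1"
  using assms unfolding is_algebra_norm_def by auto

lemma norm_sum_le:
  assumes "is_norm N" "finite A"
  shows "N (\<lambda>x. \<Sum>i\<in>A. F i x) \<le> (\<Sum>i\<in>A. N (F i))"
  using assms(2)
proof (induction A rule: finite_induct)
  case empty
  then show ?case using is_normD(1)[OF assms(1)] by simp
next
  case (insert a A)
  have "N (\<lambda>x. \<Sum>i\<in>insert a A. F i x) = N (\<lambda>x. F a x + (\<Sum>i\<in>A. F i x))"
    using insert by simp
  also have "\<dots> \<le> N (F a) + N (\<lambda>x. \<Sum>i\<in>A. F i x)"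
    by (rule is_normD(5)[OF assms(1)])
  also have "\<dots> \<le> N (F a) + (\<Sum>i\<in>A. N (F i))"
    using insert by simp
  finally show ?case using insert by simp
qed

lemma convex_on_norm_vec:
  fixes N :: "('a::finite \<Rightarrow> real) \<Rightarrow> real"
  assumes "is_norm N"
  shows "convex_on UNIV (\<lambda>v::real^'a. N (vec_nth v))"
  unfolding convex_on_def
proof (intro conjI ballI allI impI)
  fix x y :: "real^'a" and u v :: real
  assume uv: "0 \<le> u" "0 \<le> v" "u + v = 1"
  have "N (vec_nth (u *\<^sub>R x + v *\<^sub>R y)) = N (\<lambda>i. u * x$i + v * y$i)"
    by (rule arg_cong[of _ _ N]) (simp add: fun_eq_iff)
  also have "\<dots> \<le> N (\<lambda>i. u * x$i) + N (\<lambda>i. v * y$i)"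
    by (rule is_normD(5)[OF assms])
  also have "\<dots> = u * N (vec_nth x) + v * N (vec_nth y)"
    using is_normD(4)[OF assms] uv by simp
  finally show "N (vec_nth (u *\<^sub>R x + v *\<^sub>R y)) \<le> u * N (vec_nth x) + v * N (vec_nth y)" .
qed simp

lemma continuous_on_norm_vec:
  fixes N :: "('a::finite \<Rightarrow> real) \<Rightarrow> real"
  assumes "is_norm N"
  shows "continuous_on UNIV (\<lambda>v::real^'a. N (vec_nth v))"
  by (rule convex_on_continuous[OF _ convex_on_norm_vec[OF assms]]) simp

text \<open>Equivalence with the Euclidean norm: \<open>N\<close> attains a positive minimum on the unit sphere.\<close>

lemma abs_le_const_mult_norm:
  fixes N :: "('a::finite \<Rightarrow> real) \<Rightarrow> real"
  assumes "is_norm N"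
  obtains c where "c > 0" "\<And>f x. \<bar>f x\<bar> \<le> c * N f"
proof -
  let ?M = "\<lambda>v::real^'a. N (vec_nth v)"
  have "sphere (0::real^'a) 1 \<noteq> {}"
    by (simp add: sphere_eq_empty)
  then obtain v0 where v0: "v0 \<in> sphere 0 1" "\<And>y. y \<in> sphere 0 1 \<Longrightarrow> ?M v0 \<le> ?M y"
    using continuous_attains_inf[OF compact_sphere _
        continuous_on_subset[OF continuous_on_norm_vec[OF assms]]] by blast
  then have "vec_nth v0 \<noteq> (\<lambda>_. 0)"
    by (metis norm_zero vec_lambda_eta zero_neq_one mem_sphere_0 zero_vec_def)
  then have M0: "?M v0 > 0"
    using is_normD(2,3)[OF assms] by (metis less_eq_real_def)
  have "\<bar>f x\<bar> \<le> 1 / ?M v0 * N f" for f x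
  proof -
    define v where "v = vec_lambda f"
    have "\<bar>f x\<bar> \<le> norm v"
      using component_le_norm_cart[of v x] by (simp add: v_def)
    moreover have "norm v \<le> N f / ?M v0"
    proof (cases "v = 0")
      case True
      then show ?thesis using is_normD(2)[OF assms] M0 by simp
    next
      case False
      then have "?M v0 \<le> ?M ((1 / norm v) *\<^sub>R v)"
        by (intro v0(2)) simp
      also have "\<dots> = N (\<lambda>i. (1 / norm v) * f i)"
        by (rule arg_cong[of _ _ N]) (simp add: fun_eq_iff v_def)
      also have "\<dots> = N f / norm v"
        using is_normD(4)[OF assms, of "1 / norm v" f] by simp
      finally show ?thesis using False M0 by (simp add: field_simps)
    qed
    ultimately show ?thesis by simp
  qed
  with M0 show thesis by (intro that[of "1 / ?M v0"]) auto
qed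

lemma ip_commute: "ip f \<phi> = ip \<phi> f"
  by (simp add: ip_def mult.commute)

lemma ip_diff_left: "ip (\<lambda>x. f x - g x) \<phi> = ip f \<phi> - ip g \<phi>"
  by (simp add: ip_def sum_subtractf left_diff_distrib diff_divide_distrib)

lemma ip_add_left: "ip (\<lambda>x. f x + g x) \<phi> = ip f \<phi> + ip g \<phi>"
  by (simp add: ip_def sum.distrib distrib_right distrib_left)

lemma ip_scale_left: "ip (\<lambda>x. c * f x) \<phi> = c * ip f \<phi>"
  by (simp add: ip_def sum_distrib_left mult.assoc)

lemma ip_mono:
  assumes "\<And>x. f x * \<phi> x \<le> g x * \<psi> x"
  shows "ip f \<phi> \<le> ip g \<psi>"
  unfolding ip_def by (intro mult_left_mono sum_mono assms) simp

lemma ip_le_L1norm: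
  assumes "\<And>x. \<bar>\<phi> x\<bar> \<le> d"
  shows "ip m \<phi> \<le> d * L1norm m"
proof -
  have "m x * \<phi> x \<le> (d * \<bar>m x\<bar>) * 1" for x
  proof -
    have "m x * \<phi> x \<le> \<bar>m x\<bar> * \<bar>\<phi> x\<bar>"
      by (metis abs_ge_self abs_mult)
    also have "\<dots> \<le> \<bar>m x\<bar> * d"
      by (rule mult_left_mono[OF assms]) simp
    finally show ?thesis by (simp add: mult.commute)
  qed
  then have "ip m \<phi> \<le> ip (\<lambda>x. d * \<bar>m x\<bar>) (\<lambda>_. 1)"
    by (rule ip_mono)
  then show ?thesis
    by (simp add: ip_def L1norm_def sum_distrib_left)
qed

lemma L1norm_diff_le: "L1norm (\<lambda>x. f x - g x) \<le> L1norm f + L1norm g"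
proof -
  have "(\<Sum>x\<in>UNIV. \<bar>f x - g x\<bar>) \<le> (\<Sum>x\<in>UNIV. \<bar>f x\<bar>) + (\<Sum>x\<in>UNIV. \<bar>g x\<bar>)"
    unfolding sum.distrib[symmetric] by (intro sum_mono abs_triangle_ineq4)
  from divide_right_mono[OF this, of "real CARD('a)"] show ?thesis
    unfolding L1norm_def by (simp add: add_divide_distrib)
qed

lemma ip_le_dual_norm:
  fixes N :: "('a::finite \<Rightarrow> real) \<Rightarrow> real"
  assumes N: "is_norm N" and h: "N h \<le> 1"
  shows "ip h \<phi> \<le> dual_norm N \<phi>"
proof -
  obtain c where c: "c > 0" "\<And>h x. \<bar>h x\<bar> \<le> c * N h"
    using abs_le_const_mult_norm[OF N] by blast
  have "bdd_above {ip h \<phi> | h. N h \<le> 1}"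
  proof (rule bdd_aboveI, clarify)
    fix h :: "'a \<Rightarrow> real"
    assume "N h \<le> 1"
    then have "\<bar>h x\<bar> \<le> c" for x
      using c(2)[of h x] mult_left_mono[of "N h" 1 c] c(1) by linarith
    then have "ip \<phi> h \<le> c * L1norm \<phi>"
      by (rule ip_le_L1norm)
    then show "ip h \<phi> \<le> c * L1norm \<phi>"
      by (simp add: ip_commute)
  qed
  with h show ?thesis
    unfolding dual_norm_def by (intro cSup_upper) auto
qed

lemma dual_norm_nonneg:
  assumes "is_norm N"
  shows "0 \<le> dual_norm N \<phi>"
  using ip_le_dual_norm[OF assms, of "\<lambda>_. 0"] is_normD(1)[OF assms] by (simp add: ip_def)

lemma ip_le_norm_mult_dual_norm:
  fixes N :: "('a::finite \<Rightarrow> real) \<Rightarrow> real"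
  assumes N: "is_norm N"
  shows "ip f \<phi> \<le> N f * dual_norm N \<phi>"
proof (cases "N f = 0")
  case True
  then have "f = (\<lambda>_. 0)"
    using is_normD(3)[OF N] by blast
  then show ?thesis
    by (simp add: ip_def is_normD(1)[OF N])
next
  case False
  then have pos: "N f > 0"
    using is_normD(2)[OF N, of f] by simp
  have "N (\<lambda>x. (1 / N f) * f x) = 1"
    using is_normD(4)[OF N, of "1 / N f" f] pos by simp
  then have "ip (\<lambda>x. (1 / N f) * f x) \<phi> \<le> dual_norm N \<phi>"
    by (intro ip_le_dual_norm[OF N]) simp
  then have "ip f \<phi> / N f \<le> dual_norm N \<phi>"
    by (simp only: ip_scale_left) simp
  then show ?thesis
    using pos by (simp add: divide_le_eq mult.commute)
qed

lemma dual_norm_le: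
  assumes "is_norm N" "\<And>h. N h \<le> 1 \<Longrightarrow> ip h \<phi> \<le> c"
  shows "dual_norm N \<phi> \<le> c"
proof -
  have "N (\<lambda>_. 0) \<le> 1"
    using is_normD(1)[OF assms(1)] by simp
  then show ?thesis
    unfolding dual_norm_def using assms(2) by (intro cSup_least) blast+
qed

lemma algebra_norm_power_le:
  assumes A: "is_algebra_norm A"
  shows "A (\<lambda>x. \<phi> x ^ k) \<le> A \<phi> ^ k"
proof (induction k)
  case 0
  then show ?case using is_algebra_normD(3)[OF A] by simp
next
  case (Suc k)
  have "A (\<lambda>x. \<phi> x ^ Suc k) \<le> A \<phi> * A (\<lambda>x. \<phi> x ^ k)"
    using is_algebra_normD(2)[OF A, of \<phi> "\<lambda>x. \<phi> x ^ k"] by simp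
  also have "\<dots> \<le> A \<phi> * A \<phi> ^ k"
    using Suc is_normD(2)[OF is_algebra_normD(1)[OF A]] by (simp add: mult_left_mono)
  finally show ?case by simp
qed

text \<open>
  An algebra norm dominates the sup norm: with \<open>\<bar>h x\<bar> \<le> c A h\<close> we get
  \<open>\<bar>\<phi> x\<bar>\<^sup>k \<le> c A(\<phi>)\<^sup>k\<close> for every \<open>k\<close>, which is impossible if \<open>\<bar>\<phi> x\<bar> > A \<phi>\<close>.
\<close>

lemma abs_le_algebra_norm:
  fixes A :: "('a::finite \<Rightarrow> real) \<Rightarrow> real"
  assumes A: "is_algebra_norm A"
  shows "\<bar>\<phi> x\<bar> \<le> A \<phi>"
proof (rule ccontr)
  assume "\<not> ?thesis"
  then have lt: "A \<phi> < \<bar>\<phi> x\<bar>" by simp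
  obtain c where c: "c > 0" "\<And>h y. \<bar>h y\<bar> \<le> c * A h"
    using abs_le_const_mult_norm[OF is_algebra_normD(1)[OF A]] by blast
  have pow: "\<bar>\<phi> x\<bar> ^ k \<le> c * A \<phi> ^ k" for k
  proof -
    have "\<bar>\<phi> x\<bar> ^ k \<le> c * A (\<lambda>y. \<phi> y ^ k)"
      using c(2)[of "\<lambda>y. \<phi> y ^ k" x] by (simp add: power_abs)
    also have "\<dots> \<le> c * A \<phi> ^ k"
      using algebra_norm_power_le[OF A] c(1) by (simp add: mult_left_mono)
    finally show ?thesis .
  qed
  show False
  proof (cases "A \<phi> = 0")
    case True
    then show False using pow[of 1] lt by simp
  next
    case False
    then have pos: "A \<phi> > 0"
      using is_normD(2)[OF is_algebra_normD(1)[OF A]] by (simp add: less_le)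
    then have "1 < \<bar>\<phi> x\<bar> / A \<phi>"
      using lt by simp
    then obtain k where k: "c < (\<bar>\<phi> x\<bar> / A \<phi>) ^ k"
      using real_arch_pow by blast
    have "(\<bar>\<phi> x\<bar> / A \<phi>) ^ k \<le> c"
      using pow[of k] pos by (simp add: power_divide divide_le_eq)
    then show False using k by simp
  qed
qed

lemma algebra_norm_poly_le:
  assumes A: "is_algebra_norm A"
  shows "A (\<lambda>x. poly P (\<phi> x)) \<le> R_poly P (A \<phi>)"
proof -
  have AN: "is_norm A" by (rule is_algebra_normD(1)[OF A])
  have "A (\<lambda>x. poly P (\<phi> x)) = A (\<lambda>x. \<Sum>i\<le>degree P. coeff P i * \<phi> x ^ i)"
    by (simp add: poly_altdef)
  also have "\<dots> \<le> (\<Sum>i\<le>degree P. A (\<lambda>x. coeff P i * \<phi> x ^ i))"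
    by (rule norm_sum_le[OF AN]) simp
  also have "\<dots> = (\<Sum>i\<le>degree P. \<bar>coeff P i\<bar> * A (\<lambda>x. \<phi> x ^ i))"
    using is_normD(4)[OF AN] by simp
  also have "\<dots> \<le> (\<Sum>i\<le>degree P. \<bar>coeff P i\<bar> * A \<phi> ^ i)"
    by (intro sum_mono mult_left_mono algebra_norm_power_le[OF A]) simp
  finally show ?thesis by (simp add: R_poly_def)
qed

lemma R_poly_mono:
  assumes "0 \<le> a" "a \<le> b"
  shows "R_poly P a \<le> R_poly P b"
  unfolding R_poly_def using assms by (intro sum_mono mult_left_mono power_mono) auto

lemma poly_uniform_approximation:
  fixes J :: "real \<Rightarrow> real"
  assumes "compact S" "continuous_on S J" "d > 0"
  obtains P where "\<forall>x\<in>S. \<bar>poly P x - J x\<bar> \<le> d"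
proof -
  obtain g where g: "real_polynomial_function g" "\<And>x. x \<in> S \<Longrightarrow> \<bar>J x - g x\<bar> < d"
    using Stone_Weierstrass_real_polynomial_function[OF assms] by blast
  obtain a n where an: "g = (\<lambda>x. \<Sum>i\<le>n. a i * x ^ i)"
    using real_polynomial_function_imp_sum[OF g(1)] by blast
  have "poly (\<Sum>i\<le>n. monom (a i) i) x = g x" for x
    by (simp add: an poly_sum poly_monom)
  then show thesis
    using g(2) by (intro that[of "\<Sum>i\<le>n. monom (a i) i"]) (auto simp: abs_minus_commute less_imp_le)
qed

text \<open>
  Split \<open>J \<circ> \<phi> = P \<circ> \<phi> + (J - P) \<circ> \<phi>\<close>: the values of \<open>\<phi>\<close> lie in \<open>[-C, C]\<close> because the
  dual norm dominates the sup norm, so the second part contributes at most \<open>d \<parallel>m\<parallel>\<^sub>1\<close>.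
\<close>

lemma ip_comp_le_R_poly:
  fixes N :: "('a::finite \<Rightarrow> real) \<Rightarrow> real"
  assumes N: "is_norm N" and A: "is_algebra_norm (dual_norm N)"
    and P: "\<forall>x\<in>{-C..C}. \<bar>poly P x - J x\<bar> \<le> d" and \<phi>: "dual_norm N \<phi> \<le> C"
  shows "ip m (\<lambda>x. J (\<phi> x)) \<le> N m * R_poly P C + d * L1norm m"
proof -
  have "ip m (\<lambda>x. poly P (\<phi> x)) \<le> N m * dual_norm N (\<lambda>x. poly P (\<phi> x))"
    by (rule ip_le_norm_mult_dual_norm[OF N])
  also have "\<dots> \<le> N m * R_poly P (dual_norm N \<phi>)"
    using algebra_norm_poly_le[OF A] is_normD(2)[OF N] by (simp add: mult_left_mono)
  also have "\<dots> \<le> N m * R_poly P C"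
    using R_poly_mono[OF dual_norm_nonneg[OF N] \<phi>] is_normD(2)[OF N] by (simp add: mult_left_mono)
  finally have poly_part: "ip m (\<lambda>x. poly P (\<phi> x)) \<le> N m * R_poly P C" .
  have "\<phi> x \<in> {-C..C}" for x
    using abs_le_algebra_norm[OF A, of \<phi> x] \<phi> by auto
  then have "ip m (\<lambda>x. J (\<phi> x) - poly P (\<phi> x)) \<le> d * L1norm m"
    using P by (intro ip_le_L1norm) (simp add: abs_minus_commute)
  then have "ip m (\<lambda>x. J (\<phi> x)) - ip m (\<lambda>x. poly P (\<phi> x)) \<le> d * L1norm m"
    by (simp add: ip_commute[of m] ip_diff_left)
  with poly_part show ?thesis by simp
qed

lemma ip_comp_le_rho:
  fixes N :: "('a::finite \<Rightarrow> real) \<Rightarrow> real"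
  assumes N: "is_norm N" and A: "is_algebra_norm (dual_norm N)"
    and J: "continuous_on {-C..C} J" and d: "d > 0" and \<phi>: "dual_norm N \<phi> \<le> C"
  shows "ip m (\<lambda>x. J (\<phi> x)) \<le> rho C d J / 2 * N m + d * L1norm m"
proof -
  define S where "S = {R_poly P C | P. \<forall>x\<in>{-C..C}. \<bar>poly P x - J x\<bar> \<le> d}"
  have le_S: "ip m (\<lambda>x. J (\<phi> x)) - d * L1norm m \<le> N m * s" if "s \<in> S" for s
    using that ip_comp_le_R_poly[OF N A _ \<phi>, of _ J d m] unfolding S_def by force
  obtain P where "\<forall>x\<in>{-C..C}. \<bar>poly P x - J x\<bar> \<le> d"
    using poly_uniform_approximation[OF compact_Icc J d] by blast
  then have S_ne: "S \<noteq> {}"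
    unfolding S_def by blast
  have "ip m (\<lambda>x. J (\<phi> x)) - d * L1norm m \<le> N m * Inf S"
  proof (cases "N m = 0")
    case True
    then show ?thesis using le_S S_ne by force
  next
    case False
    then have pos: "N m > 0"
      using is_normD(2)[OF N, of m] by simp
    have "(ip m (\<lambda>x. J (\<phi> x)) - d * L1norm m) / N m \<le> Inf S"
      using le_S pos S_ne by (intro cInf_greatest) (auto simp: divide_le_eq mult.commute)
    then show ?thesis
      using pos by (simp add: divide_le_eq mult.commute)
  qed
  moreover have "rho C d J = 2 * Inf S"
    unfolding rho_def S_def ..
  ultimately show ?thesis by (simp add: mult.commute)
qed

lemma convex_norm_sublevel_vec:
  fixes N :: "('a::finite \<Rightarrow> real) \<Rightarrow> real"
  assumes N: "is_norm N"
  shows "convex {v::real^'a. N (vec_nth v) \<le> r}"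
  unfolding convex_def
proof clarify
  fix x y :: "real^'a" and u v :: real
  assume h: "N (vec_nth x) \<le> r" "N (vec_nth y) \<le> r" "0 \<le> u" "0 \<le> v" "u + v = 1"
  have "N (vec_nth (u *\<^sub>R x + v *\<^sub>R y)) \<le> u * N (vec_nth x) + v * N (vec_nth y)"
    using convex_on_norm_vec[OF N] h(3-5) unfolding convex_on_def by blast
  also have "\<dots> \<le> u * r + v * r"
    using h by (intro add_mono mult_left_mono) auto
  finally show "N (vec_nth (u *\<^sub>R x + v *\<^sub>R y)) \<le> r"
    using h(5) by (metis distrib_right mult_1)
qed

text \<open>
  The separating functional is rescaled so that the separating level becomes \<open>1\<close>; this is
  possible because \<open>0\<close> lies in the set separated from \<open>f\<close>.
\<close>

lemma separation_from_box_plus_norm_ball: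
  fixes N :: "('a::finite \<Rightarrow> real) \<Rightarrow> real" and u f :: "'a \<Rightarrow> real"
  assumes N: "is_norm N" and u: "\<forall>x. 0 \<le> u x" and \<eta>: "0 \<le> \<eta>"
    and no_g: "\<not> (\<exists>g. (\<forall>x. 0 \<le> g x \<and> g x \<le> u x) \<and> N (\<lambda>x. f x - g x) \<le> \<eta>)"
  obtains \<psi> where "1 < ip f \<psi>"
    "\<And>g h. \<forall>x. 0 \<le> g x \<and> g x \<le> u x \<Longrightarrow> N h \<le> \<eta> \<Longrightarrow> ip (\<lambda>x. g x + h x) \<psi> < 1"
proof -
  define K where "K = cbox (0::real^'a) (\<chi> i. u i)"
  define B where "B = {v::real^'a. N (vec_nth v) \<le> \<eta>}"
  define T where "T = (\<Union>a\<in>K. \<Union>b\<in>B. {a + b})"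
  have K: "vec_lambda g \<in> K \<longleftrightarrow> (\<forall>x. 0 \<le> g x \<and> g x \<le> u x)" for g
    by (simp add: K_def mem_box_cart)
  have "closed B"
    unfolding B_def by (rule closed_Collect_le[OF continuous_on_norm_vec[OF N]]) simp
  then have "closed T"
    unfolding T_def K_def by (intro compact_closed_sums) simp_all
  moreover have "convex T"
    unfolding T_def K_def B_def by (intro convex_sums convex_norm_sublevel_vec[OF N]) simp
  moreover have "vec_lambda f \<notin> T"
  proof
    assume "vec_lambda f \<in> T"
    then obtain a b where ab: "a \<in> K" "b \<in> B" "vec_lambda f = a + b"
      unfolding T_def by blast
    have "(\<lambda>x. f x - a $ x) = vec_nth b"
      using arg_cong[OF ab(3), of vec_nth] by (auto simp: fun_eq_iff)
    then have "(\<forall>x. 0 \<le> a $ x \<and> a $ x \<le> u x) \<and> N (\<lambda>x. f x - a $ x) \<le> \<eta>"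
      using ab(1,2) K[of "vec_nth a"] by (simp add: B_def)
    with no_g show False by blast
  qed
  ultimately obtain a b where ab: "inner a (vec_lambda f) < b" "\<forall>x\<in>T. b < inner a x"
    using separating_hyperplane_closed_point by blast
  have "0 \<in> K" "0 \<in> B"
    using u is_normD(1)[OF N] \<eta> by (simp_all add: K_def B_def mem_box_cart zero_vec_def vec_lambda_inverse)
  then have "(0::real^'a) \<in> T"
    unfolding T_def by force
  then have b: "b < 0"
    using ab(2) by fastforce
  define \<psi> where "\<psi> = (\<lambda>i. real CARD('a) * a $ i / b)"
  have ip_\<psi>: "ip g \<psi> = inner a (vec_lambda g) / b" for g
    by (simp add: ip_def \<psi>_def inner_vec_def sum_divide_distrib mult.commute mult.left_commute)
  show thesis
  proof (rule that)
    show "1 < ip f \<psi>"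
      using ab(1) b by (simp add: ip_\<psi> less_divide_eq_1_neg)
    fix g h :: "'a \<Rightarrow> real"
    assume "\<forall>x. 0 \<le> g x \<and> g x \<le> u x" "N h \<le> \<eta>"
    then have "vec_lambda g \<in> K" "vec_lambda h \<in> B"
      using K[of g] by (simp_all add: B_def vec_lambda_inverse)
    then have "vec_lambda g + vec_lambda h \<in> T"
      unfolding T_def by blast
    moreover have "vec_lambda (\<lambda>x. g x + h x) = vec_lambda g + vec_lambda h"
      by (simp add: vec_eq_iff)
    ultimately have "vec_lambda (\<lambda>x. g x + h x) \<in> T"
      by simp
    then show "ip (\<lambda>x. g x + h x) \<psi> < 1"
      using ab(2) b by (simp add: ip_\<psi> divide_less_eq_1_neg)
  qed
qed

text \<open>
  Testing the separating functional against \<open>u\<close> on its positivity set plus \<open>\<eta>\<close> times an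
  arbitrary unit vector gives the dual-norm bound.
\<close>

lemma dual_certificate_of_no_approximant:
  fixes N :: "('a::finite \<Rightarrow> real) \<Rightarrow> real" and u f :: "'a \<Rightarrow> real"
  assumes N: "is_norm N" and u: "\<forall>x. 0 \<le> u x" and \<eta>: "0 < \<eta>"
    and no_g: "\<not> (\<exists>g. (\<forall>x. 0 \<le> g x \<and> g x \<le> u x) \<and> N (\<lambda>x. f x - g x) \<le> \<eta>)"
  obtains \<phi> where "1 < ip f \<phi>" "ip u (\<lambda>x. max (\<phi> x) 0) + \<eta> * dual_norm N \<phi> \<le> 1"
proof -
  obtain \<phi> where \<phi>: "1 < ip f \<phi>"
    "\<And>g h. \<forall>x. 0 \<le> g x \<and> g x \<le> u x \<Longrightarrow> N h \<le> \<eta> \<Longrightarrow> ip (\<lambda>x. g x + h x) \<phi> < 1"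
    using separation_from_box_plus_norm_ball[OF N u _ no_g] \<eta> by auto
  define g0 where "g0 = (\<lambda>x. if \<phi> x > 0 then u x else 0)"
  have g0: "\<forall>x. 0 \<le> g0 x \<and> g0 x \<le> u x"
    using u by (simp add: g0_def)
  have ip_g0: "ip g0 \<phi> = ip u (\<lambda>x. max (\<phi> x) 0)"
    unfolding ip_def g0_def by (intro arg_cong[where f = "(*) _"] sum.cong) auto
  have "ip h \<phi> \<le> (1 - ip u (\<lambda>x. max (\<phi> x) 0)) / \<eta>" if "N h \<le> 1" for h
  proof -
    have "N (\<lambda>x. \<eta> * h x) \<le> \<eta>"
      using is_normD(4)[OF N, of \<eta> h] that \<eta> by (simp add: mult_left_le)
    then have "ip (\<lambda>x. g0 x + \<eta> * h x) \<phi> < 1"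
      by (rule \<phi>(2)[OF g0])
    then show ?thesis
      using \<eta> by (simp add: ip_add_left ip_scale_left ip_g0 field_simps)
  qed
  then have "dual_norm N \<phi> \<le> (1 - ip u (\<lambda>x. max (\<phi> x) 0)) / \<eta>"
    by (rule dual_norm_le[OF N])
  with \<phi>(1) \<eta> show thesis
    by (intro that) (simp_all add: field_simps)
qed

lemma pos_part_gap_of_no_approximant:
  fixes N :: "('a::finite \<Rightarrow> real) \<Rightarrow> real" and \<mu> \<nu> f :: "'a \<Rightarrow> real"
  assumes N: "is_norm N" and nu_nonneg: "\<forall>x. 0 \<le> \<nu> x"
    and f_bounds: "\<forall>x. 0 \<le> f x \<and> f x \<le> \<mu> x" and \<eta>: "0 < \<eta>" and \<delta>: "\<delta> < 1"
    and no_g: "\<not> (\<exists>g. (\<forall>x. 0 \<le> g x \<and> g x \<le> \<nu> x / (1 - \<delta>)) \<and> N (\<lambda>x. f x - g x) \<le> \<eta>)"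
  obtains \<phi> where "dual_norm N \<phi> \<le> 1 / \<eta>" "\<delta> < ip (\<lambda>x. \<mu> x - \<nu> x) (\<lambda>x. max (\<phi> x) 0)"
proof -
  have "\<forall>x. 0 \<le> \<nu> x / (1 - \<delta>)"
    using nu_nonneg \<delta> by simp
  then obtain \<phi> where \<phi>: "1 < ip f \<phi>"
    "ip (\<lambda>x. \<nu> x / (1 - \<delta>)) (\<lambda>x. max (\<phi> x) 0) + \<eta> * dual_norm N \<phi> \<le> 1"
    using dual_certificate_of_no_approximant[OF N _ \<eta> no_g] by blast
  let ?J = "\<lambda>x. max (\<phi> x) 0"
  have "ip (\<lambda>x. \<nu> x / (1 - \<delta>)) ?J = ip \<nu> ?J / (1 - \<delta>)"
    using ip_scale_left[of "1 / (1 - \<delta>)" \<nu>] by simp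
  moreover have "0 \<le> ip \<nu> ?J / (1 - \<delta>)" "0 \<le> \<eta> * dual_norm N \<phi>"
    using nu_nonneg \<delta> \<eta> dual_norm_nonneg[OF N]
    by (auto simp: ip_def intro!: divide_nonneg_nonneg sum_nonneg)
  ultimately have "ip \<nu> ?J / (1 - \<delta>) \<le> 1" "\<eta> * dual_norm N \<phi> \<le> 1"
    using \<phi>(2) by linarith+
  then have nu_part: "ip \<nu> ?J \<le> 1 - \<delta>" and dual: "dual_norm N \<phi> \<le> 1 / \<eta>"
    using \<eta> \<delta> by (simp_all add: le_divide_eq mult.commute)
  have "f x * \<phi> x \<le> \<mu> x * max (\<phi> x) 0" for x
  proof -
    have "f x * \<phi> x \<le> f x * max (\<phi> x) 0"
      using f_bounds by (intro mult_left_mono) auto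
    also have "\<dots> \<le> \<mu> x * max (\<phi> x) 0"
      using f_bounds by (intro mult_right_mono) auto
    finally show ?thesis .
  qed
  then have "ip f \<phi> \<le> ip \<mu> ?J"
    by (rule ip_mono)
  with \<phi>(1) nu_part have "\<delta> < ip (\<lambda>x. \<mu> x - \<nu> x) ?J"
    by (simp add: ip_diff_left)
  with dual show thesis
    by (rule that)
qed

theorem theorem4p4:
  fixes \<mu> \<nu> f :: "'a::finite \<Rightarrow> real"
    and N :: "('a \<Rightarrow> real) \<Rightarrow> real"
    and \<eta> \<delta> :: real
  assumes mu_nonneg: "\<forall>x. 0 \<le> \<mu> x" and nu_nonneg: "\<forall>x. 0 \<le> \<nu> x"
    and mu_L1: "L1norm \<mu> \<le> 1" and nu_L1: "L1norm \<nu> \<le> 1"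
    and eta_pos: "\<eta> > 0" and delta_pos: "\<delta> > 0" and delta_lt1: "\<delta> < 1"
    and N_norm: "is_norm N"
    and dual_alg: "is_algebra_norm (dual_norm N)"
    and close: "2 * rho (1 / \<eta>) (\<delta> / 4) (\<lambda>x. (x + \<bar>x\<bar>) / 2) * N (\<lambda>x. \<mu> x - \<nu> x) \<le> \<delta>"
    and f_bounds: "\<forall>x. 0 \<le> f x \<and> f x \<le> \<mu> x"
  shows "\<exists>g :: 'a \<Rightarrow> real. (\<forall>x. 0 \<le> g x \<and> g x \<le> \<nu> x / (1 - \<delta>)) \<and>
           N (\<lambda>x. f x - g x) \<le> \<eta>"
proof (rule ccontr)
  assume "\<not> ?thesis"
  then obtain \<phi> where dual: "dual_norm N \<phi> \<le> 1 / \<eta>"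
    and gap: "\<delta> < ip (\<lambda>x. \<mu> x - \<nu> x) (\<lambda>x. max (\<phi> x) 0)"
    using pos_part_gap_of_no_approximant[OF N_norm nu_nonneg f_bounds eta_pos delta_lt1] by blast
  let ?m = "\<lambda>x. \<mu> x - \<nu> x"
  have "ip ?m (\<lambda>x. max (\<phi> x) 0) \<le> rho (1 / \<eta>) (\<delta> / 4) (\<lambda>x. max x 0) / 2 * N ?m + \<delta> / 4 * L1norm ?m"
    using delta_pos by (intro ip_comp_le_rho[OF N_norm dual_alg _ _ dual]) (auto intro: continuous_intros)
  also have "\<dots> \<le> \<delta> / 4 + \<delta> / 4 * 2"
  proof (rule add_mono)
    have "(\<lambda>x::real. (x + \<bar>x\<bar>) / 2) = (\<lambda>x. max x 0)"
      by (auto simp: fun_eq_iff)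
    then show "rho (1 / \<eta>) (\<delta> / 4) (\<lambda>x. max x 0) / 2 * N ?m \<le> \<delta> / 4"
      using close by (simp add: mult.commute mult.left_commute)
    show "\<delta> / 4 * L1norm ?m \<le> \<delta> / 4 * 2"
      using L1norm_diff_le[of \<mu> \<nu>] mu_L1 nu_L1 delta_pos by (intro mult_left_mono) auto
  qed
  finally show False
    using gap delta_pos by simp
qed

end
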